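(* Let $n$ be a positive integer and let $\alpha,\beta,\gamma,\delta$ be distinct complex numbers satisfying $(\alpha+\beta)(\gamma+\delta)=2(\alpha\beta+\gamma\delta)$. Then $$\lim_{k\to\alpha}\frac{d^n}{dk^n}\,\frac{(k-\gamma)^n(k-\delta)^n}{(k-\beta)^{n+1}}=\begin{cases}0 & n\text{ odd},\\[4pt] (-1)^{n/2}\dfrac{(\gamma-\delta)^n}{(\alpha-\beta)^{n+1}}\,\prod_{i=1}^{n/2}(2i-1)^2 & n\text{ even}.\end{cases}$$ *)

theory Defs
  imports "HOL-Analysis.Analysis"
begin

end

theory Submission
  imports Defs "HOL-Complex_Analysis.Complex_Analysis"
begin

text \<open>
  After the shift v = z - \<beta> the limit is simply the value at a = \<alpha> - \<beta> of the n-th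
  derivative of (v - c)^n (v - d)^n / v^(n+1), where c = \<gamma> - \<beta> and d = \<delta> - \<beta>. This
  function is v^(n-1) F(1/v) for the polynomial F(u) = (1 - c u)^n (1 - d u)^n, and the classical
  inversion formula D^(n+1) [v^n F(1/v)] = (-1)^(n+1) F^(n+1)(1/v) / v^(n+2) reduces the problem to
  F^(n)(1/a). The hypothesis says that a is the harmonic mean of c and d, i.e. that 1/a is the
  midpoint of the roots 1/c and 1/d of F. So F is a polynomial in (u - 1/a)^2: its odd derivatives
  vanish at 1/a, and for n = 2j the n-th derivative there is n! times the middle binomial term,
  which is where the central binomial coefficient, hence the product of odd squares, comes from.
\<close>

lemma fact_double_eq_odd_prod:
  "fact (2 * k) = (2 ^ k * fact k * (\<Prod>i=1..k. 2 * of_nat i - 1) :: 'a::{comm_ring_1,ring_char_0})"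
proof (induction k)
  case (Suc k)
  have "fact (2 * Suc k) = (2 * of_nat (Suc k)) * (2 * of_nat (Suc k) - 1) * (fact (2 * k) :: 'a)"
    by (simp add: algebra_simps)
  also have "\<dots> = 2 ^ Suc k * fact (Suc k) * ((\<Prod>i=1..k. 2 * of_nat i - 1) * (2 * of_nat (Suc k) - 1))"
    by (simp only: Suc fact_Suc of_nat_mult) (simp add: algebra_simps)
  finally show ?case
    by (simp only: prod.nat_ivl_Suc' le_add1 Suc_eq_plus1 [symmetric] Suc_le_mono) simp
qed simp

lemma central_binomial_mult_fact:
  "of_nat (2 * k choose k) * fact (2 * k) = (4 ^ k * (\<Prod>i=1..k. 2 * of_nat i - 1) ^ 2 :: 'a::{idom,ring_char_0})"
proof -
  have "fact k * fact k * of_nat (2 * k choose k) = (fact (2 * k) :: 'a)"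
    using binomial_fact_lemma[of k "2 * k"] by (metis diff_mult_distrib mult_2 add_diff_cancel_left' le_add1 of_nat_fact of_nat_mult)
  then have "fact k * fact k * (of_nat (2 * k choose k) * fact (2 * k)) = (fact (2 * k) * fact (2 * k) :: 'a)"
    by (simp add: mult.assoc)
  also have "\<dots> = fact k * fact k * (4 ^ k * (\<Prod>i=1..k. 2 * of_nat i - 1) ^ 2)"
    unfolding fact_double_eq_odd_prod by (simp add: power2_eq_square algebra_simps flip: power_mult_distrib)
  finally show ?thesis by simp
qed

lemma higher_deriv_power_at_center:
  "(deriv ^^ j) (\<lambda>w. (w - z) ^ p) z = (if p = j then fact j else 0)"
  by (cases "j \<le> p") (auto simp: higher_deriv_power pochhammer_fact pochhammer_0_left)

lemma higher_deriv_sum_powers_at_center: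
  fixes K :: "'i \<Rightarrow> complex" and p :: "'i \<Rightarrow> nat"
  assumes "finite A"
  shows "(deriv ^^ j) (\<lambda>w. \<Sum>k\<in>A. K k * (w - z) ^ p k) z = (\<Sum>k\<in>{k\<in>A. p k = j}. K k) * fact j"
  using assms
proof (induction A rule: finite_induct)
  case (insert x A)
  have "(deriv ^^ j) (\<lambda>w. \<Sum>k\<in>insert x A. K k * (w - z) ^ p k) z
      = (deriv ^^ j) (\<lambda>w. K x * (w - z) ^ p x + (\<Sum>k\<in>A. K k * (w - z) ^ p k)) z"
    using insert by simp
  also have "\<dots> = K x * (deriv ^^ j) (\<lambda>w. (w - z) ^ p x) z + (deriv ^^ j) (\<lambda>w. \<Sum>k\<in>A. K k * (w - z) ^ p k) z"
    by (subst higher_deriv_add[of _ UNIV], (auto intro!: holomorphic_intros)[4],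
        subst higher_deriv_cmult[of _ UNIV]) (auto intro!: holomorphic_intros)
  moreover have "{k \<in> insert x A. p k = j} = (if p x = j then insert x {k \<in> A. p k = j} else {k \<in> A. p k = j})"
    by auto
  ultimately show ?case
    using insert by (simp add: higher_deriv_power_at_center distrib_right)
qed simp

lemma higher_deriv_quadratic_power_at_center:
  fixes z h :: complex
  shows "(deriv ^^ n) (\<lambda>w. ((w - z) ^ 2 - h ^ 2) ^ n) z
    = (if odd n then 0 else (- 1) ^ (n div 2) * (2 * h) ^ n * (\<Prod>i=1..n div 2. (2 * of_nat i - 1) ^ 2))"
proof -
  have expand: "((w - z) ^ 2 - h ^ 2) ^ n
      = (\<Sum>k\<le>n. of_nat (n choose k) * (- (h ^ 2)) ^ (n - k) * (w - z) ^ (2 * k))" for w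
    unfolding diff_conv_add_uminus[of "(w - z) ^ 2"] binomial_ring[of "(w - z) ^ 2" "- (h ^ 2)" n]
    by (simp add: mult_ac flip: power_mult)
  have "{k \<in> {..n}. 2 * k = n} = (if odd n then {} else {n div 2})"
    by auto
  then have "(deriv ^^ n) (\<lambda>w. ((w - z) ^ 2 - h ^ 2) ^ n) z
      = (if odd n then 0 else of_nat (n choose (n div 2)) * (- (h ^ 2)) ^ (n div 2) * fact n)"
    unfolding expand by (auto simp: higher_deriv_sum_powers_at_center elim!: evenE)
  also have "\<dots> = (if odd n then 0 else (- 1) ^ (n div 2) * (2 * h) ^ n * (\<Prod>i=1..n div 2. (2 * of_nat i - 1) ^ 2))"
  proof (cases "even n")
    case True
    then obtain j where j: "n = 2 * j" ..
    have "of_nat (2 * j choose j) * (- (h ^ 2)) ^ j * fact (2 * j)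
        = (- (h ^ 2)) ^ j * (of_nat (2 * j choose j) * fact (2 * j))"
      by (simp add: mult_ac)
    also have "\<dots> = (- (h ^ 2)) ^ j * 4 ^ j * (\<Prod>i=1..j. (2 * of_nat i - 1) ^ 2)"
      by (simp only: central_binomial_mult_fact prod_power_distrib mult.assoc)
    also have "(- (h ^ 2)) ^ j * 4 ^ j = (- ((2 * h) ^ 2)) ^ j"
      unfolding power_mult_distrib[symmetric] by (simp add: power2_eq_square mult.commute)
    also have "\<dots> = (- 1) ^ j * (2 * h) ^ (2 * j)"
      by (simp only: power_minus[of "(2 * h) ^ 2"] power_mult)
    finally show ?thesis
      by (simp add: j)
  qed simp
  finally show ?thesis .
qed

lemma higher_deriv_times_id:
  fixes G :: "complex \<Rightarrow> complex"
  assumes "G holomorphic_on S" "open S" "x \<in> S"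
  shows "(deriv ^^ Suc k) (\<lambda>y. y * G y) x = x * (deriv ^^ Suc k) G x + of_nat (Suc k) * (deriv ^^ k) G x"
proof -
  have "(deriv ^^ Suc k) (\<lambda>y. y * G y) x
      = (\<Sum>i=0..Suc k. of_nat (Suc k choose i) * (deriv ^^ i) (\<lambda>y. y) x * (deriv ^^ (Suc k - i)) G x)"
    by (rule higher_deriv_mult[OF _ assms]) (auto intro: holomorphic_intros)
  also have "\<dots> = (\<Sum>i\<in>{0, 1}. of_nat (Suc k choose i) * (deriv ^^ i) (\<lambda>y. y) x * (deriv ^^ (Suc k - i)) G x)"
    by (rule sum.mono_neutral_right) auto
  finally show ?thesis
    by (simp del: funpow.simps)
qed

lemma has_field_derivative_inverse_comp_div_power:
  fixes F :: "complex \<Rightarrow> complex"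
  assumes "(F has_field_derivative F') (at (1 / x))" "x \<noteq> 0"
  shows "((\<lambda>y. F (1 / y) / y ^ m) has_field_derivative
           - (F' / x ^ (m + 2) + of_nat m * F (1 / x) / x ^ (m + 1))) (at x)"
proof -
  have "((\<lambda>y. 1 / y) has_field_derivative - 1 / x ^ 2) (at x)"
    using assms(2) by (auto intro!: derivative_eq_intros simp: power2_eq_square)
  from DERIV_chain2[OF assms(1) this]
  have inner: "((\<lambda>y. F (1 / y)) has_field_derivative F' * (- 1 / x ^ 2)) (at x)" .
  have power: "((\<lambda>y. y ^ m) has_field_derivative of_nat m * x ^ (m - 1)) (at x)"
    by (rule derivative_eq_intros refl)+ simp
  have power_pred: "of_nat m * x ^ (m - 1) = of_nat m * x ^ m / x"
    using assms(2) by (cases m) auto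
  have derivative: "(F' * (- 1 / x ^ 2) * x ^ m - F (1 / x) * (of_nat m * x ^ (m - 1))) / (x ^ m * x ^ m)
      = - (F' / x ^ (m + 2) + of_nat m * F (1 / x) / x ^ (m + 1))"
    unfolding power_pred using assms(2) by (simp add: field_simps power_add power2_eq_square)
  from DERIV_divide[OF inner power] show ?thesis
    unfolding derivative using assms(2) by simp
qed

lemma higher_deriv_inversion:
  fixes F :: "complex \<Rightarrow> complex"
  assumes F: "F holomorphic_on UNIV" and x: "x \<noteq> 0"
  shows "(deriv ^^ Suc n) (\<lambda>y. y ^ n * F (1 / y)) x = (- 1) ^ Suc n * (deriv ^^ Suc n) F (1 / x) / x ^ (n + 2)"
  using x
proof (induction n arbitrary: x)
  case 0
  have "(F has_field_derivative deriv F (1 / x)) (at (1 / x))"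
    using F holomorphic_derivI by blast
  from has_field_derivative_inverse_comp_div_power[OF this 0, of 0]
  show ?case by (simp add: DERIV_imp_deriv)
next
  case (Suc n)
  define G where "G = (\<lambda>y. y ^ n * F (1 / y))"
  \<comment> \<open>Leibniz's rule for y * G y leaves the IH for G near x and its derivative at x.\<close>
  have "G holomorphic_on - {0}"
    unfolding G_def by (intro holomorphic_intros holomorphic_on_compose_gen[OF _ F, unfolded o_def]) auto
  then have times_id: "(deriv ^^ Suc (Suc n)) (\<lambda>y. y ^ Suc n * F (1 / y)) x
      = x * (deriv ^^ Suc (Suc n)) G x + of_nat (Suc (Suc n)) * (deriv ^^ Suc n) G x"
    using higher_deriv_times_id[of G "- {0}" x "Suc n"] Suc.prems by (simp add: G_def mult.assoc open_Compl)
  have "((deriv ^^ Suc n) F has_field_derivative (deriv ^^ Suc (Suc n)) F (1 / x)) (at (1 / x))"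
    using has_field_derivative_higher_deriv[OF F open_UNIV UNIV_I, of "Suc n"] by simp
  from has_field_derivative_inverse_comp_div_power[OF this Suc.prems, of "n + 2"]
  have deriv_IH_rhs: "deriv (\<lambda>y. (- 1) ^ Suc n * ((deriv ^^ Suc n) F (1 / y) / y ^ (n + 2))) x
      = (- 1) ^ Suc n * - ((deriv ^^ Suc (Suc n)) F (1 / x) / x ^ (n + 4)
           + of_nat (n + 2) * (deriv ^^ Suc n) F (1 / x) / x ^ (n + 3))"
    by (intro DERIV_imp_deriv DERIV_cmult) (simp add: numeral_eq_Suc)
  have IH_near: "\<forall>\<^sub>F y in nhds x. (deriv ^^ Suc n) G y = (- 1) ^ Suc n * ((deriv ^^ Suc n) F (1 / y) / y ^ (n + 2))"
    using t1_space_nhds[OF Suc.prems]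
    by eventually_elim (simp only: G_def Suc.IH times_divide_eq_right not_False_eq_True)
  have "(deriv ^^ Suc (Suc n)) G x = deriv ((deriv ^^ Suc n) G) x"
    by (simp only: funpow.simps(2) o_apply)
  also have "\<dots> = deriv (\<lambda>y. (- 1) ^ Suc n * ((deriv ^^ Suc n) F (1 / y) / y ^ (n + 2))) x"
    by (rule deriv_cong_ev[OF IH_near refl])
  finally have deriv2_G: "(deriv ^^ Suc (Suc n)) G x = (- 1) ^ Suc n * - ((deriv ^^ Suc (Suc n)) F (1 / x) / x ^ (n + 4)
           + of_nat (n + 2) * (deriv ^^ Suc n) F (1 / x) / x ^ (n + 3))"
    unfolding deriv_IH_rhs .
  have deriv_G: "(deriv ^^ Suc n) G x = (- 1) ^ Suc n * (deriv ^^ Suc n) F (1 / x) / x ^ (n + 2)"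
    unfolding G_def by (rule Suc.IH[OF Suc.prems])
  have rearrange: "x * ((- 1) ^ Suc n * - (B / x ^ (n + 4) + of_nat (n + 2) * A / x ^ (n + 3)))
      + of_nat (Suc (Suc n)) * ((- 1) ^ Suc n * A / x ^ (n + 2)) = (- 1) ^ Suc (Suc n) * B / x ^ (Suc n + 2)"
    for A B
    using Suc.prems by (simp add: field_simps power_add numeral_eq_Suc)
  show ?case
    unfolding times_id deriv2_G deriv_G by (rule rearrange)
qed

lemma tendsto_higher_deriv:
  assumes "f holomorphic_on S" "open S" "z \<in> S"
  shows "((deriv ^^ n) f \<longlongrightarrow> (deriv ^^ n) f z) (at z)"
  using holomorphic_higher_deriv[OF assms(1,2)] assms
  by (meson continuous_on_eq_continuous_at holomorphic_on_imp_continuous_on isContD)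

lemma harmonic_mean_factorization:
  fixes a c d v :: complex
  assumes "c \<noteq> 0" "d \<noteq> 0" "a * (c + d) = 2 * c * d" "v \<noteq> 0"
  shows "(v - c) * (v - d) = c * d * v ^ 2 * ((1 / v - 1 / a) ^ 2 - ((1 / c - 1 / d) / 2) ^ 2)"
proof -
  have "a \<noteq> 0"
    using assms(1-3) by auto
  then have inverse_midpoint: "1 / a = (1 / c + 1 / d) / 2"
    using assms(1-3) by (simp add: field_simps)
  show ?thesis
    unfolding inverse_midpoint using assms(1,2,4) by (simp add: field_simps power2_eq_square)
qed

lemma higher_deriv_at_harmonic_mean:
  fixes a c d :: complex
  assumes "n \<ge> 1" "c \<noteq> 0" "d \<noteq> 0" and harmonic: "a * (c + d) = 2 * c * d"
  shows "(deriv ^^ n) (\<lambda>v. (v - c) ^ n * (v - d) ^ n / v ^ (n + 1)) a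
    = (if odd n then 0
       else (- 1) ^ (n div 2) * (c - d) ^ n / a ^ (n + 1) * (\<Prod>i=1..n div 2. (2 * of_nat i - 1) ^ 2))"
proof -
  obtain m where n: "n = Suc m"
    using assms(1) by (cases n) auto
  have "a \<noteq> 0"
    using assms(2,3) harmonic by auto
  define h where "h = (1 / c - 1 / d) / 2"
  define F where "F u = (c * d) ^ n * ((u - 1 / a) ^ 2 - h ^ 2) ^ n" for u
  have F_holo: "F holomorphic_on UNIV"
    unfolding F_def[abs_def] by (intro holomorphic_intros)
  have inversion_form: "(v - c) ^ n * (v - d) ^ n / v ^ (n + 1) = v ^ m * F (1 / v)" if "v \<noteq> 0" for v
  proof -
    have "(v - c) ^ n * (v - d) ^ n / v ^ (n + 1) = (c * d * v ^ 2 * ((1 / v - 1 / a) ^ 2 - h ^ 2)) ^ n / v ^ (n + 1)"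
      using harmonic_mean_factorization[OF assms(2,3) harmonic that]
      by (simp add: h_def flip: power_mult_distrib)
    also have "\<dots> = (c * d) ^ n * (v ^ 2) ^ n / v ^ (n + 1) * ((1 / v - 1 / a) ^ 2 - h ^ 2) ^ n"
      by (simp add: power_mult_distrib)
    also have "(v ^ 2) ^ n = v ^ (n + 1) * v ^ m"
      by (simp add: n mult_2 flip: power_mult power_add)
    finally show ?thesis
      using that by (simp add: F_def)
  qed
  have "\<forall>\<^sub>F v in nhds a. (v - c) ^ n * (v - d) ^ n / v ^ (n + 1) = v ^ m * F (1 / v)"
    using t1_space_nhds[OF \<open>a \<noteq> 0\<close>] by eventually_elim (rule inversion_form)
  then have "(deriv ^^ n) (\<lambda>v. (v - c) ^ n * (v - d) ^ n / v ^ (n + 1)) a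
      = (deriv ^^ Suc m) (\<lambda>v. v ^ m * F (1 / v)) a"
    unfolding n by (rule higher_deriv_cong_ev[OF _ refl])
  also have "\<dots> = (- 1) ^ n * (deriv ^^ n) F (1 / a) / a ^ (n + 1)"
    using higher_deriv_inversion[OF F_holo \<open>a \<noteq> 0\<close>, of m] by (simp add: n del: funpow.simps)
  also have "(deriv ^^ n) F (1 / a)
      = (c * d) ^ n * (if odd n then 0
          else (- 1) ^ (n div 2) * (2 * h) ^ n * (\<Prod>i=1..n div 2. (2 * of_nat i - 1) ^ 2))"
    unfolding F_def[abs_def]
    by (subst higher_deriv_cmult[of _ UNIV]) (auto intro!: holomorphic_intros simp: higher_deriv_quadratic_power_at_center)
  finally have reduced: "(deriv ^^ n) (\<lambda>v. (v - c) ^ n * (v - d) ^ n / v ^ (n + 1)) a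
      = (- 1) ^ n * ((c * d) ^ n * (if odd n then 0
          else (- 1) ^ (n div 2) * (2 * h) ^ n * (\<Prod>i=1..n div 2. (2 * of_nat i - 1) ^ 2))) / a ^ (n + 1)" .
  have "c * d * (2 * h) = d - c"
    unfolding h_def using assms(2,3) by (simp add: field_simps)
  then have "(c * d) ^ n * (2 * h) ^ n = (d - c) ^ n"
    unfolding power_mult_distrib[symmetric] by (simp only:)
  moreover have "(- 1) ^ n = (1 :: complex)" "(d - c) ^ n = (c - d) ^ n" if "even n"
    using that by (simp, metis minus_diff_eq power_minus_even)
  ultimately show ?thesis
    unfolding reduced by (simp add: mult_ac)
qed

theorem theorem7:
  fixes n :: nat and \<alpha> \<beta> \<gamma> \<delta> :: complex
  assumes "n \<ge> 1"
    and "distinct [\<alpha>, \<beta>, \<gamma>, \<delta>]"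
    and "(\<alpha> + \<beta>) * (\<gamma> + \<delta>) = 2 * (\<alpha> * \<beta> + \<gamma> * \<delta>)"
  shows "((\<lambda>k. (deriv ^^ n) (\<lambda>z. (z - \<gamma>) ^ n * (z - \<delta>) ^ n / (z - \<beta>) ^ (n + 1)) k)
           \<longlongrightarrow>
           (if odd n then 0
            else (-1) ^ (n div 2) * (\<gamma> - \<delta>) ^ n / (\<alpha> - \<beta>) ^ (n + 1)
                 * (\<Prod>i=1..n div 2. (2 * of_nat i - 1) ^ 2))) (at \<alpha>)"
proof -
  define f where "f z = (z - \<gamma>) ^ n * (z - \<delta>) ^ n / (z - \<beta>) ^ (n + 1)" for z
  define \<phi> where "\<phi> v = (v - (\<gamma> - \<beta>)) ^ n * (v - (\<delta> - \<beta>)) ^ n / v ^ (n + 1)" for v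
  have "\<phi> holomorphic_on - {0}"
    unfolding \<phi>_def[abs_def] by (intro holomorphic_intros) auto
  moreover have "f = (\<lambda>w. \<phi> (1 * w + - \<beta>))"
    by (simp add: f_def \<phi>_def fun_eq_iff)
  ultimately have "(deriv ^^ n) f \<alpha> = (deriv ^^ n) \<phi> (\<alpha> - \<beta>)"
    using higher_deriv_compose_linear'[of \<phi> "- {0}" "- {\<beta>}" \<alpha> 1 "- \<beta>" n] assms(2)
    by (simp add: open_Compl)
  also have "\<dots> = (if odd n then 0
      else (-1) ^ (n div 2) * (\<gamma> - \<delta>) ^ n / (\<alpha> - \<beta>) ^ (n + 1) * (\<Prod>i=1..n div 2. (2 * of_nat i - 1) ^ 2))"
  proof -
    have "(\<alpha> - \<beta>) * ((\<gamma> - \<beta>) + (\<delta> - \<beta>)) = 2 * (\<gamma> - \<beta>) * (\<delta> - \<beta>)"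
      using assms(3) by algebra
    moreover have "\<gamma> - \<beta> \<noteq> 0" "\<delta> - \<beta> \<noteq> 0"
      using assms(2) by auto
    ultimately show ?thesis
      using higher_deriv_at_harmonic_mean[OF assms(1), of "\<gamma> - \<beta>" "\<delta> - \<beta>" "\<alpha> - \<beta>"]
      unfolding \<phi>_def[abs_def] by simp
  qed
  finally have value_at_\<alpha>: "(deriv ^^ n) f \<alpha> = (if odd n then 0
      else (-1) ^ (n div 2) * (\<gamma> - \<delta>) ^ n / (\<alpha> - \<beta>) ^ (n + 1) * (\<Prod>i=1..n div 2. (2 * of_nat i - 1) ^ 2))" .
  have "f holomorphic_on - {\<beta>}"
    unfolding f_def[abs_def] by (intro holomorphic_intros) auto
  then have "((deriv ^^ n) f \<longlongrightarrow> (deriv ^^ n) f \<alpha>) (at \<alpha>)"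
    by (rule tendsto_higher_deriv) (use assms(2) in \<open>auto simp: open_Compl\<close>)
  then show ?thesis
    unfolding value_at_\<alpha> by (simp only: f_def[abs_def])
qed

end
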